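(* Let $B\subset\mathcal S$ be nonempty, $\nu$ a probability measure on $\mathcal S$, $K>0$ and $(\Phi,\Psi)$ a Legendre–Fenchel pair of Young functions. Consider the statements (i) for all $A\subset\mathcal S\setminus B$: $\nu[A]\,\Psi^{-1}(K/\nu[A])\le C_\Psi\,\mathrm{cap}(A,B)$; (ii) for all $f\in\ell^2(\mu)$ with $f|_B\equiv0$: $\|f^2\|_{\Phi,\nu,K}\le C_\Phi\,\mathcal E(f)$. If (i) holds with a constant $C_\Psi>0$, then (ii) holds with $C_\Phi=4C_\Psi$. Conversely, if (ii) holds with a constant $C_\Phi>0$, then (i) holds with $C_\Psi=C_\Phi$. In particular the optimal constants satisfy $C_\Psi\le C_\Phi\le4C_\Psi$.
   Context: $\mathcal S$ countable; irreducible positive recurrent Markov chain on $\mathcal S$ with transition probabilities $p(x,y)$, reversible w.r.t. its invariant probability measure $\mu$; $\mathcal E(f)=\frac12\sum_{x,y}\mu(x)p(x,y)(f(x)-f(y))^2$; $\tau_A=\inf\{t>0:X(t)\in A\}$; $\mathrm{cap}(A,B)=\sum_{x\in A}\mu(x)\mathbb P_x[\tau_B<\tau_A]=\inf\{\mathcal E(g):g|_A=1,g|_B=0\}$, $\mathrm{cap}(\emptyset,B)=0$. Young function: convex $\Phi:[0,\infty)\to[0,\infty]$ with $\Phi(0)=\lim_{r\to0}\Phi(r)=0$, $\lim_{r\to\infty}\Phi(r)=\infty$; Legendre–Fenchel pair: $\Psi(r)=\sup_{s\ge0}\{sr-\Phi(s)\}$. $\Psi^{-1}(t)=\inf\{s\in[0,\infty]:\Psi(s)>t\}$.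 Orlicz norm $\|f\|_{\Phi,\nu,K}=\sup\{\mathbb E_\nu[|f|g]:g\ge0,\mathbb E_\nu[\Psi(g)]\le K\}$. Convention: the left side of (i) is $0$ when $\nu[A]=0$. *)

theory Defs
  imports "HOL-Probability.Probability"
begin

definition reversible_chain :: "('a::countable \<Rightarrow> 'a \<Rightarrow> real) \<Rightarrow> 'a pmf \<Rightarrow> bool" where
  "reversible_chain p \<mu> \<longleftrightarrow>
     (\<forall>x y. 0 \<le> p x y) \<and>
     (\<forall>x. ((\<lambda>y. p x y) has_sum 1) UNIV) \<and>
     (\<forall>x y. (x, y) \<in> {(u, v). 0 < p u v}\<^sup>*) \<and>
     (\<forall>x. 0 < pmf \<mu> x) \<and>
     (\<forall>y. ((\<lambda>x. pmf \<mu> x * p x y) has_sum pmf \<mu> y) UNIV) \<and>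
     (\<forall>x y. pmf \<mu> x * p x y = pmf \<mu> y * p y x)"

definition dirichlet_form :: "('a::countable \<Rightarrow> 'a \<Rightarrow> real) \<Rightarrow> 'a pmf \<Rightarrow> ('a \<Rightarrow> real) \<Rightarrow> ennreal" where
  "dirichlet_form p \<mu> f =
     ennreal (1/2) * (\<integral>\<^sup>+ xy. ennreal (pmf \<mu> (fst xy) * p (fst xy) (snd xy) *
                               (f (fst xy) - f (snd xy))\<^sup>2) \<partial>count_space UNIV)"

text \<open>Capacity via the Dirichlet principle: cap(A,B) = inf { E(g) : g|A = 1, g|B = 0 }.\<close>
definition capacity :: "('a::countable \<Rightarrow> 'a \<Rightarrow> real) \<Rightarrow> 'a pmf \<Rightarrow> 'a set \<Rightarrow> 'a set \<Rightarrow> ennreal" where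
  "capacity p \<mu> A B =
     (INF g \<in> {g. (\<forall>x\<in>A. g x = 1) \<and> (\<forall>x\<in>B. g x = 0)}. dirichlet_form p \<mu> g)"

text \<open>Young function on [0,\<infinity>) with values in [0,\<infinity>] (only values at r \<ge> 0 matter).\<close>
definition young_function :: "(real \<Rightarrow> ennreal) \<Rightarrow> bool" where
  "young_function \<Phi> \<longleftrightarrow>
     (\<forall>a\<ge>0. \<forall>b\<ge>0. \<forall>t\<in>{0..1}.
        \<Phi> ((1 - t) * a + t * b) \<le> ennreal (1 - t) * \<Phi> a + ennreal t * \<Phi> b) \<and>
     \<Phi> 0 = 0 \<and> (\<Phi> \<longlongrightarrow> 0) (at_right 0) \<and> (\<Phi> \<longlongrightarrow> \<infinity>) at_top"

definition lf_conj :: "(real \<Rightarrow> ennreal) \<Rightarrow> real \<Rightarrow> ennreal" where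
  "lf_conj \<Phi> r = (SUP s \<in> {0..}. e2ennreal (ereal (s * r) - enn2ereal (\<Phi> s)))"

text \<open>Generalised inverse: Psi^{-1}(t) = inf { s \<in> [0,\<infinity>] : Psi(s) > t }, with Psi(\<infinity>) = \<infinity>.\<close>
definition gen_inv :: "(real \<Rightarrow> ennreal) \<Rightarrow> ennreal \<Rightarrow> ennreal" where
  "gen_inv \<Psi> t = Inf ({ennreal s | s. 0 \<le> s \<and> t < \<Psi> s} \<union> {\<infinity>})"

definition orlicz_norm :: "(real \<Rightarrow> ennreal) \<Rightarrow> 'a pmf \<Rightarrow> real \<Rightarrow> ('a \<Rightarrow> real) \<Rightarrow> ennreal" where
  "orlicz_norm \<Phi> \<nu> K h =
     (SUP g \<in> {g. (\<forall>x. 0 \<le> g x) \<and> (\<integral>\<^sup>+ x. lf_conj \<Phi> (g x) \<partial>measure_pmf \<nu>) \<le> ennreal K}.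
        \<integral>\<^sup>+ x. ennreal (\<bar>h x\<bar> * g x) \<partial>measure_pmf \<nu>)"

definition cap_ineq :: "('a::countable \<Rightarrow> 'a \<Rightarrow> real) \<Rightarrow> 'a pmf \<Rightarrow> 'a set \<Rightarrow> 'a pmf \<Rightarrow> real
    \<Rightarrow> (real \<Rightarrow> ennreal) \<Rightarrow> real \<Rightarrow> bool" where
  "cap_ineq p \<mu> B \<nu> K \<Psi> C \<longleftrightarrow>
     (\<forall>A. A \<subseteq> - B \<longrightarrow>
        (if measure_pmf.prob \<nu> A = 0 then 0
         else ennreal (measure_pmf.prob \<nu> A) * gen_inv \<Psi> (ennreal (K / measure_pmf.prob \<nu> A)))
        \<le> ennreal C * capacity p \<mu> A B)"

definition orlicz_ineq :: "('a::countable \<Rightarrow> 'a \<Rightarrow> real) \<Rightarrow> 'a pmf \<Rightarrow> 'a set \<Rightarrow> 'a pmf \<Rightarrow> real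
    \<Rightarrow> (real \<Rightarrow> ennreal) \<Rightarrow> real \<Rightarrow> bool" where
  "orlicz_ineq p \<mu> B \<nu> K \<Phi> C \<longleftrightarrow>
     (\<forall>f. (\<lambda>x. pmf \<mu> x * (f x)\<^sup>2) summable_on UNIV \<longrightarrow> (\<forall>x\<in>B. f x = 0) \<longrightarrow>
        orlicz_norm \<Phi> \<nu> K (\<lambda>x. (f x)\<^sup>2) \<le> ennreal C * dirichlet_form p \<mu> f)"

end

theory Submission
  imports Defs
begin

text \<open>
  (i) implies (ii): write f(x)^2 as the integral over s > 0 of the indicator of s < f(x)^2. Against
  an admissible test function g, the level set A_s = {f^2 > s} contributes at most
  nu[A_s] Psi^-1(K / nu[A_s]) by the Fenchel-Young inequality, hence at most C cap(A_s, B), which is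
  bounded by C E(min(f^2, s) / s). Integrating in s and exchanging the order of summation, the factor
  4 comes from the one-dimensional estimate
  int_0^oo ((min(u^2, s) - min(v^2, s)) / s)^2 ds <= 4 (u - v)^2.

  (ii) implies (i): if g = 1 on A and g = 0 on B, its truncation to [0, 1] has smaller energy, and
  testing the Orlicz norm of its square with t 1_A, where Psi(t) <= K / nu[A], gives
  t nu[A] <= C E(g).

  Only p >= 0 and Psi(0) = 0 are used.
\<close>

section \<open>A one-dimensional estimate\<close>

lemma sq_sub_four_mult_add_ln_nonneg:
  fixes x :: real assumes "1 \<le> x"
  shows "0 \<le> x\<^sup>2 - 4*x + 3 + 2 * ln x"
proof -
  let ?h = "\<lambda>x::real. x\<^sup>2 - 4*x + 3 + 2 * ln x"
  have "?h 1 \<le> ?h x"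
  proof (rule DERIV_nonneg_imp_nondecreasing[OF assms])
    fix t :: real assume t: "1 \<le> t" "t \<le> x"
    have "(?h has_real_derivative 2 * (t - 1)\<^sup>2 / t) (at t)"
      using t by (auto intro!: derivative_eq_intros simp: field_simps power2_eq_square)
    thus "\<exists>y. (?h has_real_derivative y) (at t) \<and> 0 \<le> y" using t by auto
  qed
  thus ?thesis by simp
qed

lemma diff_sub_mult_ln_le_sqrt_diff_sq:
  fixes a b :: real assumes "0 < a" "a \<le> b"
  shows "2*(b - a) - 2*a*ln (b/a) \<le> 4*(sqrt b - sqrt a)\<^sup>2"
proof -
  define x where "x = sqrt b / sqrt a"
  have x1: "1 \<le> x" using assms unfolding x_def by (simp add: real_sqrt_le_iff)
  have bx: "sqrt b = x * sqrt a" unfolding x_def using assms by simp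
  have b: "b = x\<^sup>2 * a" using assms by (metis bx power_mult_distrib real_sqrt_pow2 less_imp_le order_trans)
  have "ln (b/a) = 2 * ln x" using assms x1 by (simp add: b ln_realpow)
  hence "4*(sqrt b - sqrt a)\<^sup>2 - (2*(b - a) - 2*a*ln (b/a)) = 2*a*(x\<^sup>2 - 4*x + 3 + 2 * ln x)"
    using b bx assms by (simp add: power2_eq_square algebra_simps)
  also have "\<dots> \<ge> 0" using sq_sub_four_mult_add_ln_nonneg[OF x1] assms by simp
  finally show ?thesis by simp
qed

lemma nn_integral_inverse_sq_atLeast:
  fixes b c :: real assumes "0 < b" "0 \<le> c"
  shows "(\<integral>\<^sup>+s\<in>{b..}. ennreal (c / s\<^sup>2) \<partial>lborel) = ennreal (c / b)"
proof -
  have "(\<integral>\<^sup>+s\<in>{b..}. ennreal (c / s\<^sup>2) \<partial>lborel) = ennreal (0 - (- c / b))"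
  proof (rule nn_integral_FTC_atLeast[where F="\<lambda>s. - c / s"])
    fix x assume "b \<le> x"
    thus "((\<lambda>s. - c / s) has_real_derivative c / x\<^sup>2) (at x)"
      using assms by (auto intro!: derivative_eq_intros simp: power2_eq_square field_simps)
  next
    show "((\<lambda>s. - c / s) \<longlongrightarrow> 0) at_top"
      by (intro tendsto_divide_0[OF tendsto_const] filterlim_at_top_imp_at_infinity filterlim_ident)
  qed (use assms in auto)
  thus ?thesis by simp
qed

lemma truncation_quotient_sq_le:
  fixes a b s :: real assumes "0 \<le> a" "a \<le> b" "0 < s"
  shows "((min a s - min b s)/s)\<^sup>2 \<le> (if a \<le> s \<and> s \<le> b then (s-a)\<^sup>2/s\<^sup>2 else 0)
            + (if b \<le> s then (b-a)\<^sup>2/s\<^sup>2 else 0)"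
proof -
  consider "s \<le> a" | "a \<le> s" "s \<le> b" | "b \<le> s" by linarith
  thus ?thesis
  proof cases
    case 2
    hence "((min a s - min b s)/s)\<^sup>2 = (s-a)\<^sup>2/s\<^sup>2" by (simp add: power_divide power2_commute)
    thus ?thesis using 2 by simp
  qed (use assms in \<open>auto simp: min_def power_divide power2_commute\<close>)
qed

lemma nn_integral_truncation_quotient_sq_le_pos:
  fixes a b :: real assumes a: "0 < a" and ab: "a \<le> b"
  shows "(\<integral>\<^sup>+s\<in>{0<..}. ennreal (((min a s - min b s)/s)\<^sup>2) \<partial>lborel) \<le> ennreal (2*(b - a) - 2*a*ln (b/a))"
proof -
  define F where "F s = s - 2*a*ln s - a\<^sup>2/s" for s
  have F': "(F has_real_derivative (s - a)\<^sup>2 / s\<^sup>2) (at s)" if "a \<le> s" for s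
    using that a unfolding F_def[abs_def]
    by (auto intro!: derivative_eq_intros simp: power2_eq_square field_simps)
  have F_mono: "F a \<le> F b"
  proof (rule DERIV_nonneg_imp_nondecreasing[OF ab])
    fix s assume "a \<le> s"
    thus "\<exists>y. (F has_real_derivative y) (at s) \<and> 0 \<le> y" using F' by (intro exI conjI) auto
  qed
  have b: "0 < b" using a ab by simp
  have "(\<integral>\<^sup>+s\<in>{0<..}. ennreal (((min a s - min b s)/s)\<^sup>2) \<partial>lborel)
     \<le> (\<integral>\<^sup>+s. ennreal ((s - a)\<^sup>2 / s\<^sup>2) * indicator {a..b} s + ennreal ((b-a)\<^sup>2 / s\<^sup>2) * indicator {b..} s \<partial>lborel)"
  proof (rule nn_integral_mono)
    fix s :: real
    show "ennreal (((min a s - min b s)/s)\<^sup>2) * indicator {0<..} s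
      \<le> ennreal ((s - a)\<^sup>2 / s\<^sup>2) * indicator {a..b} s + ennreal ((b-a)\<^sup>2 / s\<^sup>2) * indicator {b..} s"
      using truncation_quotient_sq_le[OF less_imp_le[OF a] ab, of s]
      by (cases "0 < s"; cases "a \<le> s \<and> s \<le> b"; cases "b \<le> s")
        (auto simp: indicator_def ennreal_leI simp flip: ennreal_plus)
  qed
  also have "\<dots> = (\<integral>\<^sup>+s. ennreal ((s - a)\<^sup>2 / s\<^sup>2) * indicator {a..b} s \<partial>lborel)
       + (\<integral>\<^sup>+s\<in>{b..}. ennreal ((b-a)\<^sup>2 / s\<^sup>2) \<partial>lborel)"
    by (rule nn_integral_add) auto
  also have "\<dots> = ennreal (F b - F a) + ennreal ((b-a)\<^sup>2 / b)"
    using nn_integral_FTC_Icc[of "\<lambda>s. (s - a)\<^sup>2 / s\<^sup>2" a b F] F' ab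
    by (simp add: nn_integral_inverse_sq_atLeast[OF b])
  also have "\<dots> = ennreal (F b - F a + (b-a)\<^sup>2 / b)"
    using F_mono b by (simp flip: ennreal_plus)
  also have "F b - F a + (b-a)\<^sup>2 / b = 2*(b - a) - 2*a*ln (b/a)"
    using a b by (simp add: F_def ln_div field_simps power2_eq_square)
  finally show ?thesis .
qed

lemma nn_integral_truncation_quotient_sq_le:
  fixes a b :: real assumes "0 \<le> a" "a \<le> b"
  shows "(\<integral>\<^sup>+s\<in>{0<..}. ennreal (((min a s - min b s)/s)\<^sup>2) \<partial>lborel) \<le> ennreal (4*(sqrt b - sqrt a)\<^sup>2)"
proof (cases "0 < a")
  case True
  thus ?thesis using nn_integral_truncation_quotient_sq_le_pos[OF True assms(2)]
      diff_sub_mult_ln_le_sqrt_diff_sq[OF True assms(2)]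
    by (meson ennreal_leI order_trans)
next
  case False
  hence a: "a = 0" using assms by simp
  show ?thesis
  proof (cases "b = 0")
    case False
    hence b: "0 < b" using assms by simp
    have "(\<integral>\<^sup>+s\<in>{0<..}. ennreal (((min a s - min b s)/s)\<^sup>2) \<partial>lborel)
       \<le> (\<integral>\<^sup>+s. indicator {0..b} s + ennreal (b\<^sup>2 / s\<^sup>2) * indicator {b..} s \<partial>lborel)"
      using b by (intro nn_integral_mono)
        (auto simp: a min_def power_divide indicator_def not_le dest: less_imp_le)
    also have "\<dots> = ennreal b + ennreal (b\<^sup>2 / b)"
      using nn_integral_inverse_sq_atLeast[OF b, of "b\<^sup>2"] b by (subst nn_integral_add) auto
    also have "\<dots> = ennreal (2 * b)" using b by (simp add: power2_eq_square flip: ennreal_plus)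
    also have "\<dots> \<le> ennreal (4*(sqrt b - sqrt a)\<^sup>2)"
      using a b by (intro ennreal_leI) simp
    finally show ?thesis .
  qed (simp add: a)
qed

lemma nn_integral_truncation_diff_sq_le:
  fixes u v :: real
  shows "(\<integral>\<^sup>+s\<in>{0<..}. ennreal ((min (u\<^sup>2) s / s - min (v\<^sup>2) s / s)\<^sup>2) \<partial>lborel) \<le> ennreal (4*(u - v)\<^sup>2)"
proof -
  have sym: "(min (u\<^sup>2) s / s - min (v\<^sup>2) s / s)\<^sup>2 = ((min (v\<^sup>2) s - min (u\<^sup>2) s) / s)\<^sup>2" for s
    by (simp add: power2_commute diff_divide_distrib)
  have "(\<integral>\<^sup>+s\<in>{0<..}. ennreal ((min (u\<^sup>2) s / s - min (v\<^sup>2) s / s)\<^sup>2) \<partial>lborel)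
      \<le> ennreal (4*(sqrt (v\<^sup>2) - sqrt (u\<^sup>2))\<^sup>2)"
  proof (cases "u\<^sup>2 \<le> v\<^sup>2")
    case True
    thus ?thesis using nn_integral_truncation_quotient_sq_le[of "u\<^sup>2" "v\<^sup>2"]
      by (simp add: diff_divide_distrib)
  next
    case False
    thus ?thesis using nn_integral_truncation_quotient_sq_le[of "v\<^sup>2" "u\<^sup>2"]
      by (simp add: sym power2_commute)
  qed
  also have "\<dots> \<le> ennreal (4*(u - v)\<^sup>2)"
  proof (rule ennreal_leI)
    have "(\<bar>v\<bar> - \<bar>u\<bar>)\<^sup>2 \<le> (u - v)\<^sup>2"
      by (rule abs_le_square_iff[THEN iffD1]) (auto simp: abs_if)
    thus "4*(sqrt (v\<^sup>2) - sqrt (u\<^sup>2))\<^sup>2 \<le> 4*(u - v)\<^sup>2" by simp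
  qed
  finally show ?thesis .
qed

section \<open>Generalised inverse and the Fenchel-Young inequality\<close>

lemma ennreal_le_mult_INF:
  fixes c :: real
  assumes c: "0 < c" and le: "\<And>i. i \<in> I \<Longrightarrow> x \<le> ennreal c * f i"
  shows "x \<le> ennreal c * (INF i\<in>I. f i)"
proof -
  have "ennreal (1/c) * x \<le> (INF i\<in>I. f i)"
  proof (rule INF_greatest)
    fix i assume "i \<in> I"
    hence "ennreal (1/c) * x \<le> ennreal (1/c) * (ennreal c * f i)" by (intro mult_left_mono le) auto
    thus "ennreal (1/c) * x \<le> f i" using c by (simp add: mult.assoc[symmetric] flip: ennreal_mult)
  qed
  hence "ennreal c * (ennreal (1/c) * x) \<le> ennreal c * (INF i\<in>I. f i)" by (rule mult_left_mono) simp
  thus ?thesis using c by (simp add: mult.assoc[symmetric] flip: ennreal_mult)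
qed

lemma le_mult_gen_invI:
  fixes P :: real
  assumes P: "0 < P" and le: "\<And>s. 0 \<le> s \<Longrightarrow> t < \<Psi> s \<Longrightarrow> L \<le> ennreal (P * s)"
  shows "L \<le> ennreal P * gen_inv \<Psi> t"
proof -
  have "L \<le> ennreal P * (INF y \<in> {ennreal s |s. 0 \<le> s \<and> t < \<Psi> s} \<union> {\<infinity>}. y)"
  proof (rule ennreal_le_mult_INF[OF P])
    fix y assume "y \<in> {ennreal s |s. 0 \<le> s \<and> t < \<Psi> s} \<union> {\<infinity>}"
    thus "L \<le> ennreal P * y" using P le by (auto simp: ennreal_mult)
  qed
  thus ?thesis by (simp add: gen_inv_def)
qed

lemma gen_inv_leI:
  assumes "\<And>r. 0 \<le> r \<Longrightarrow> \<Psi> r \<le> t \<Longrightarrow> ennreal r \<le> z"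
  shows "gen_inv \<Psi> t \<le> z"
proof (rule dense_le)
  fix y assume y: "y < gen_inv \<Psi> t"
  then obtain r where r: "y = ennreal r" "0 \<le> r"
    by (cases y) (auto simp: top_unique dest: less_le_trans[OF _ top_greatest])
  have "\<not> t < \<Psi> r"
  proof
    assume "t < \<Psi> r"
    hence "gen_inv \<Psi> t \<le> ennreal r" unfolding gen_inv_def using r by (intro Inf_lower) auto
    thus False using y r by simp
  qed
  thus "y \<le> z" using assms r by (simp add: not_less)
qed

lemma mult_gen_inv_leI:
  fixes P :: real
  assumes P: "0 < P" and le: "\<And>r. 0 \<le> r \<Longrightarrow> \<Psi> r \<le> t \<Longrightarrow> ennreal (P * r) \<le> N"
  shows "ennreal P * gen_inv \<Psi> t \<le> N"
proof -
  have "gen_inv \<Psi> t \<le> ennreal (1/P) * N"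
  proof (rule gen_inv_leI)
    fix r assume "0 \<le> r" "\<Psi> r \<le> t"
    hence "ennreal (1/P) * ennreal (P * r) \<le> ennreal (1/P) * N" by (intro mult_left_mono le) auto
    thus "ennreal r \<le> ennreal (1/P) * N" using P \<open>0 \<le> r\<close> by (simp flip: ennreal_mult)
  qed
  hence "ennreal P * gen_inv \<Psi> t \<le> ennreal P * (ennreal (1/P) * N)" by (rule mult_left_mono) simp
  thus ?thesis using P by (simp add: mult.assoc[symmetric] flip: ennreal_mult)
qed

lemma lf_conj_Fenchel_Young:
  assumes "0 \<le> u" "0 \<le> t"
  shows "ennreal (u * t) \<le> lf_conj \<Phi> t + \<Phi> u"
proof (cases "\<Phi> u")
  case (real \<phi>)
  have "ennreal (u * t - \<phi>) \<le> lf_conj \<Phi> t"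
    unfolding lf_conj_def using assms real by (intro SUP_upper2[of u]) (auto simp: e2ennreal_ereal)
  moreover have "ennreal (u * t) \<le> ennreal (u * t - \<phi>) + ennreal \<phi>"
    using real by (cases "0 \<le> u * t - \<phi>") (auto simp: ennreal_neg ennreal_leI simp flip: ennreal_plus)
  ultimately show ?thesis using real by (metis add_right_mono order_trans)
qed simp

definition orlicz_profile :: "'a pmf \<Rightarrow> (real \<Rightarrow> ennreal) \<Rightarrow> real \<Rightarrow> 'a set \<Rightarrow> ennreal" where
  "orlicz_profile \<nu> \<Psi> K A =
     (if measure_pmf.prob \<nu> A = 0 then 0
      else ennreal (measure_pmf.prob \<nu> A) * gen_inv \<Psi> (ennreal (K / measure_pmf.prob \<nu> A)))"

lemma cap_ineq_iff_orlicz_profile: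
  "cap_ineq p \<mu> B \<nu> K \<Psi> C \<longleftrightarrow> (\<forall>A \<subseteq> - B. orlicz_profile \<nu> \<Psi> K A \<le> ennreal C * capacity p \<mu> A B)"
  unfolding cap_ineq_def orlicz_profile_def by simp

lemma nn_integral_indicator_le_orlicz_profile:
  fixes \<nu> :: "'a pmf" and g :: "'a \<Rightarrow> real"
  assumes conj: "\<And>r. 0 \<le> r \<Longrightarrow> \<Psi> r = lf_conj \<Phi> r" and K: "0 < K"
    and g: "\<And>x. 0 \<le> g x" and g_K: "(\<integral>\<^sup>+x. lf_conj \<Phi> (g x) \<partial>\<nu>) \<le> ennreal K"
  shows "(\<integral>\<^sup>+x. ennreal (g x) * indicator A x \<partial>\<nu>) \<le> orlicz_profile \<nu> \<Psi> K A"
proof (cases "measure_pmf.prob \<nu> A = 0")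
  case True
  hence "(\<integral>\<^sup>+x. ennreal (g x) * indicator A x \<partial>\<nu>) = (\<integral>\<^sup>+x. 0 \<partial>\<nu>)"
    by (intro nn_integral_cong_AE)
      (auto simp: AE_measure_pmf_iff measure_pmf_zero_iff split: split_indicator)
  thus ?thesis by simp
next
  case False
  define P where "P = measure_pmf.prob \<nu> A"
  have P: "0 < P" using False by (simp add: P_def zero_less_measure_iff)
  have "(\<integral>\<^sup>+x. ennreal (g x) * indicator A x \<partial>\<nu>) \<le> ennreal P * gen_inv \<Psi> (ennreal (K / P))"
  proof (rule le_mult_gen_invI[OF P])
    fix s assume s: "0 \<le> s" and "ennreal (K / P) < \<Psi> s"
    hence "ennreal (K / P) < (SUP u \<in> {0..}. e2ennreal (ereal (u * s) - enn2ereal (\<Phi> u)))"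
      using conj unfolding lf_conj_def by simp
    then obtain u where u: "0 \<le> u" and less: "ennreal (K / P) < e2ennreal (ereal (u * s) - enn2ereal (\<Phi> u))"
      by (auto simp: less_SUP_iff)
    then obtain \<phi> where \<phi>: "\<Phi> u = ennreal \<phi>" "0 \<le> \<phi>"
      by (cases "\<Phi> u") (auto simp: e2ennreal_neg)
    have "K / P < u * s - \<phi>" using less \<phi> K P by (simp add: e2ennreal_ereal ennreal_less_iff)
    hence K_less: "K + \<phi> * P < u * (P * s)"
      using P by (simp add: field_simps)
    have "0 \<le> \<phi> * P" using \<phi> P by simp
    hence u_pos: "0 < u" using K_less K u by (cases "u = 0") auto
    have "ennreal u * (\<integral>\<^sup>+x. ennreal (g x) * indicator A x \<partial>\<nu>)
        = (\<integral>\<^sup>+x. ennreal (u * g x) * indicator A x \<partial>\<nu>)"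
      using u by (simp add: nn_integral_cmult[symmetric] ennreal_mult g mult.assoc)
    also have "\<dots> \<le> (\<integral>\<^sup>+x. lf_conj \<Phi> (g x) + \<Phi> u * indicator A x \<partial>\<nu>)"
      using lf_conj_Fenchel_Young[OF u g] by (intro nn_integral_mono) (auto split: split_indicator)
    also have "\<dots> = (\<integral>\<^sup>+x. lf_conj \<Phi> (g x) \<partial>\<nu>) + ennreal (\<phi> * P)"
      using \<phi> by (simp add: nn_integral_add nn_integral_cmult_indicator P_def
          measure_pmf.emeasure_eq_measure ennreal_mult)
    also have "\<dots> \<le> ennreal (K + \<phi> * P)"
      using g_K \<phi> P K by (simp add: ennreal_plus)
    also have "\<dots> \<le> ennreal u * ennreal (P * s)"
      using K_less u by (subst ennreal_mult'[symmetric]) (auto intro: ennreal_leI)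
    finally show "(\<integral>\<^sup>+x. ennreal (g x) * indicator A x \<partial>\<nu>) \<le> ennreal (P * s)"
      using u_pos by (subst (asm) ennreal_mult_le_mult_iff) auto
  qed
  thus ?thesis using False by (simp add: orlicz_profile_def P_def)
qed

lemma orlicz_profile_le_orlicz_norm:
  fixes \<nu> :: "'a pmf"
  assumes conj: "\<And>r. 0 \<le> r \<Longrightarrow> \<Psi> r = lf_conj \<Phi> r" and \<Psi>_0: "\<Psi> 0 = 0"
    and h: "\<And>x. x \<in> A \<Longrightarrow> 1 \<le> \<bar>h x\<bar>"
  shows "orlicz_profile \<nu> \<Psi> K A \<le> orlicz_norm \<Phi> \<nu> K h"
proof (cases "measure_pmf.prob \<nu> A = 0")
  case False
  define P where "P = measure_pmf.prob \<nu> A"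
  have P: "0 < P" using False by (simp add: P_def zero_less_measure_iff)
  have "ennreal P * gen_inv \<Psi> (ennreal (K / P)) \<le> orlicz_norm \<Phi> \<nu> K h"
  proof (rule mult_gen_inv_leI[OF P])
    fix r assume r: "0 \<le> r" and \<Psi>_r: "\<Psi> r \<le> ennreal (K / P)"
    define g where "g x = r * indicator A x" for x
    have "(\<integral>\<^sup>+x. lf_conj \<Phi> (g x) \<partial>\<nu>) = (\<integral>\<^sup>+x. \<Psi> r * indicator A x \<partial>\<nu>)"
      using r \<Psi>_0 by (intro nn_integral_cong) (auto simp: g_def conj[symmetric] split: split_indicator)
    also have "\<dots> \<le> ennreal (K / P) * ennreal P"
      using \<Psi>_r by (simp add: nn_integral_cmult_indicator P_def measure_pmf.emeasure_eq_measure mult_right_mono)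
    also have "\<dots> = ennreal K"
      using P by (simp flip: ennreal_mult'')
    finally have g_K: "(\<integral>\<^sup>+x. lf_conj \<Phi> (g x) \<partial>\<nu>) \<le> ennreal K" .
    have "ennreal (P * r) = (\<integral>\<^sup>+x. ennreal r * indicator A x \<partial>\<nu>)"
      using r P by (simp add: nn_integral_cmult_indicator P_def measure_pmf.emeasure_eq_measure
          ennreal_mult mult.commute)
    also have "\<dots> \<le> (\<integral>\<^sup>+x. ennreal (\<bar>h x\<bar> * g x) \<partial>\<nu>)"
      using r h by (intro nn_integral_mono)
        (auto simp: g_def intro!: ennreal_leI mult_le_cancel_right1[THEN iffD2] split: split_indicator)
    also have "\<dots> \<le> orlicz_norm \<Phi> \<nu> K h"
      unfolding orlicz_norm_def using g_K r by (intro SUP_upper) (auto simp: g_def)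
    finally show "ennreal (P * r) \<le> orlicz_norm \<Phi> \<nu> K h" .
  qed
  thus ?thesis using False by (simp add: orlicz_profile_def P_def)
qed (simp add: orlicz_profile_def)

section \<open>Dirichlet form and capacity\<close>

lemma dirichlet_form_comp_contraction_le:
  assumes p: "\<And>x y. 0 \<le> p x y" and contr: "\<And>a b. \<bar>\<phi> a - \<phi> b\<bar> \<le> \<bar>a - b\<bar>"
  shows "dirichlet_form p \<mu> (\<lambda>x. \<phi> (g x)) \<le> dirichlet_form p \<mu> g"
  unfolding dirichlet_form_def
proof (intro mult_left_mono nn_integral_mono ennreal_leI mult_left_mono)
  fix xy :: "'a \<times> 'a"
  show "(\<phi> (g (fst xy)) - \<phi> (g (snd xy)))\<^sup>2 \<le> (g (fst xy) - g (snd xy))\<^sup>2"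
    using contr by (simp add: abs_le_square_iff[symmetric])
qed (simp_all add: p)

lemma capacity_le_dirichlet_form:
  assumes "\<And>x. x \<in> A \<Longrightarrow> g x = 1" "\<And>x. x \<in> B \<Longrightarrow> g x = 0"
  shows "capacity p \<mu> A B \<le> dirichlet_form p \<mu> g"
  unfolding capacity_def using assms by (intro INF_lower) auto

lemma dirichlet_form_eq_nn_integral:
  assumes "\<And>x y. 0 \<le> p x y"
  shows "dirichlet_form p \<mu> f = (\<integral>\<^sup>+xy. ennreal (pmf \<mu> (fst xy) * p (fst xy) (snd xy) / 2)
           * ennreal ((f (fst xy) - f (snd xy))\<^sup>2) \<partial>count_space UNIV)"
proof -
  have "ennreal (pmf \<mu> (fst xy) * p (fst xy) (snd xy) / 2) * ennreal ((f (fst xy) - f (snd xy))\<^sup>2)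
      = ennreal (1/2) * ennreal (pmf \<mu> (fst xy) * p (fst xy) (snd xy) * (f (fst xy) - f (snd xy))\<^sup>2)"
    for xy :: "'a \<times> 'a"
    using assms by (subst (1 2) ennreal_mult[symmetric]) (simp_all add: mult_ac)
  thus ?thesis unfolding dirichlet_form_def by (simp add: nn_integral_cmult)
qed

lemma nn_integral_dirichlet_form_truncations_le:
  assumes p: "\<And>x y. 0 \<le> p x y"
  shows "(\<integral>\<^sup>+s\<in>{0<..}. dirichlet_form p \<mu> (\<lambda>x. min ((f x)\<^sup>2) s / s) \<partial>lborel)
    \<le> 4 * dirichlet_form p \<mu> f"
proof -
  define c where "c xy = ennreal (pmf \<mu> (fst xy) * p (fst xy) (snd xy) / 2)" for xy :: "'a \<times> 'a"
  define d where "d xy s = ennreal ((min ((f (fst xy))\<^sup>2) s / s - min ((f (snd xy))\<^sup>2) s / s)\<^sup>2)"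
    for xy :: "'a \<times> 'a" and s :: real
  have "(\<integral>\<^sup>+s\<in>{0<..}. dirichlet_form p \<mu> (\<lambda>x. min ((f x)\<^sup>2) s / s) \<partial>lborel)
      = (\<integral>\<^sup>+s. \<integral>\<^sup>+xy. c xy * (d xy s * indicator {0<..} s) \<partial>count_space UNIV \<partial>lborel)"
    by (simp add: dirichlet_form_eq_nn_integral[OF p] c_def d_def nn_integral_multc[symmetric] mult.assoc)
  also have "\<dots> = (\<integral>\<^sup>+xy. \<integral>\<^sup>+s. c xy * (d xy s * indicator {0<..} s) \<partial>lborel \<partial>count_space UNIV)"
    by (rule nn_integral_count_space_nn_integral) (auto simp: c_def d_def)
  also have "\<dots> = (\<integral>\<^sup>+xy. c xy * (\<integral>\<^sup>+s\<in>{0<..}. d xy s \<partial>lborel) \<partial>count_space UNIV)"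
    by (intro nn_integral_cong nn_integral_cmult) (simp add: d_def)
  also have "\<dots> \<le> (\<integral>\<^sup>+xy. c xy * (4 * ennreal ((f (fst xy) - f (snd xy))\<^sup>2)) \<partial>count_space UNIV)"
    unfolding d_def
    by (intro nn_integral_mono mult_left_mono order.trans[OF nn_integral_truncation_diff_sq_le])
      (simp_all add: ennreal_mult)
  also have "\<dots> = 4 * dirichlet_form p \<mu> f"
    by (simp add: dirichlet_form_eq_nn_integral[OF p] c_def nn_integral_cmult[symmetric] mult_ac)
  finally show ?thesis .
qed

lemma borel_measurable_dirichlet_form_truncations:
  assumes p: "\<And>x y. 0 \<le> p x y"
  shows "(\<lambda>s. dirichlet_form p \<mu> (\<lambda>x. min ((f x)\<^sup>2) s / s)) \<in> borel_measurable borel"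
proof -
  interpret sigma_finite_measure "count_space (UNIV :: ('a \<times> 'a) set)"
    by (rule sigma_finite_measure_count_space_countable) simp
  show ?thesis
    unfolding dirichlet_form_eq_nn_integral[OF p]
    by measurable
qed

lemma nn_integral_pmf_layer_cake:
  fixes \<nu> :: "'a::countable pmf" and c g :: "'a \<Rightarrow> real"
  assumes c: "\<And>x. 0 \<le> c x" and g: "\<And>x. 0 \<le> g x"
  shows "(\<integral>\<^sup>+x. ennreal (c x * g x) \<partial>\<nu>)
    = (\<integral>\<^sup>+s. \<integral>\<^sup>+x. ennreal (g x) * indicator {0<..<c x} s \<partial>\<nu> \<partial>lborel)"
proof -
  have "(\<integral>\<^sup>+s. ennreal (pmf \<nu> x * g x) * indicator {0<..<c x} s \<partial>lborel)
      = ennreal (pmf \<nu> x) * ennreal (c x * g x)" for x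
    using c[of x] g[of x] by (subst nn_integral_cmult_indicator) (auto simp: ennreal_mult[symmetric] mult_ac)
  hence "(\<integral>\<^sup>+x. ennreal (c x * g x) \<partial>\<nu>)
      = (\<integral>\<^sup>+x. \<integral>\<^sup>+s. ennreal (pmf \<nu> x * g x) * indicator {0<..<c x} s \<partial>lborel \<partial>count_space UNIV)"
    by (simp add: nn_integral_measure_pmf)
  also have "\<dots> = (\<integral>\<^sup>+s. \<integral>\<^sup>+x. ennreal (pmf \<nu> x * g x) * indicator {0<..<c x} s \<partial>count_space UNIV \<partial>lborel)"
    by (rule nn_integral_count_space_nn_integral[symmetric]) auto
  also have "\<dots> = (\<integral>\<^sup>+s. \<integral>\<^sup>+x. ennreal (g x) * indicator {0<..<c x} s \<partial>\<nu> \<partial>lborel)"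
    using g by (simp add: nn_integral_measure_pmf ennreal_mult mult.assoc)
  finally show ?thesis .
qed

lemma cap_ineq_imp_orlicz_ineq:
  assumes p: "\<And>x y. 0 \<le> p x y" and conj: "\<And>r. 0 \<le> r \<Longrightarrow> \<Psi> r = lf_conj \<Phi> r"
    and K: "0 < K" and cap: "cap_ineq p \<mu> B \<nu> K \<Psi> C"
  shows "orlicz_ineq p \<mu> B \<nu> K \<Phi> (4 * C)"
  unfolding orlicz_ineq_def orlicz_norm_def
proof (intro allI impI SUP_least)
  fix f g :: "'a \<Rightarrow> real"
  assume f_B: "\<forall>x\<in>B. f x = 0"
    and "g \<in> {g. (\<forall>x. 0 \<le> g x) \<and> (\<integral>\<^sup>+x. lf_conj \<Phi> (g x) \<partial>\<nu>) \<le> ennreal K}"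
  hence g: "\<And>x. 0 \<le> g x" and g_K: "(\<integral>\<^sup>+x. lf_conj \<Phi> (g x) \<partial>\<nu>) \<le> ennreal K" by auto
  \<comment> \<open>\<open>\<psi> s\<close> equals 1 on the level set \<open>{f\<^sup>2 > s}\<close> and 0 on \<open>B\<close>: it is admissible for its capacity.\<close>
  define \<psi> where "\<psi> s x = min ((f x)\<^sup>2) s / s" for s x
  have [measurable]: "(\<lambda>s. dirichlet_form p \<mu> (\<psi> s)) \<in> borel_measurable borel"
    unfolding \<psi>_def by (rule borel_measurable_dirichlet_form_truncations[of p, OF p])
  have level_set: "(\<integral>\<^sup>+x. ennreal (g x) * indicator {0<..<(f x)\<^sup>2} s \<partial>\<nu>)
      \<le> ennreal C * (dirichlet_form p \<mu> (\<psi> s) * indicator {0<..} s)" for s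
  proof (cases "0 < s")
    case True
    define A where "A = {x. s < (f x)\<^sup>2}"
    have "(\<integral>\<^sup>+x. ennreal (g x) * indicator {0<..<(f x)\<^sup>2} s \<partial>\<nu>) = (\<integral>\<^sup>+x. ennreal (g x) * indicator A x \<partial>\<nu>)"
      using True by (intro nn_integral_cong) (simp add: A_def indicator_def)
    also have "\<dots> \<le> orlicz_profile \<nu> \<Psi> K A"
      by (rule nn_integral_indicator_le_orlicz_profile[OF conj K g g_K])
    also have "\<dots> \<le> ennreal C * capacity p \<mu> A B"
    proof -
      have "A \<subseteq> - B" using f_B True by (auto simp: A_def)
      thus ?thesis using cap unfolding cap_ineq_iff_orlicz_profile by blast
    qed
    also have "\<dots> \<le> ennreal C * dirichlet_form p \<mu> (\<psi> s)"
      using True f_B by (intro mult_left_mono capacity_le_dirichlet_form) (auto simp: A_def \<psi>_def)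
    finally show ?thesis using True by simp
  qed simp
  have "(\<integral>\<^sup>+x. ennreal (\<bar>(f x)\<^sup>2\<bar> * g x) \<partial>\<nu>)
      = (\<integral>\<^sup>+s. \<integral>\<^sup>+x. ennreal (g x) * indicator {0<..<(f x)\<^sup>2} s \<partial>\<nu> \<partial>lborel)"
    using nn_integral_pmf_layer_cake[of "\<lambda>x. (f x)\<^sup>2" g] g by simp
  also have "\<dots> \<le> (\<integral>\<^sup>+s. ennreal C * (dirichlet_form p \<mu> (\<psi> s) * indicator {0<..} s) \<partial>lborel)"
    by (intro nn_integral_mono level_set)
  also have "\<dots> = ennreal C * (\<integral>\<^sup>+s\<in>{0<..}. dirichlet_form p \<mu> (\<psi> s) \<partial>lborel)"
    by (rule nn_integral_cmult) measurable
  also have "\<dots> \<le> ennreal C * (4 * dirichlet_form p \<mu> f)"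
    unfolding \<psi>_def by (intro mult_left_mono nn_integral_dirichlet_form_truncations_le p) simp
  also have "\<dots> = ennreal (4 * C) * dirichlet_form p \<mu> f"
    by (subst ennreal_mult') (simp_all add: mult_ac)
  finally show "(\<integral>\<^sup>+x. ennreal (\<bar>(f x)\<^sup>2\<bar> * g x) \<partial>\<nu>) \<le> ennreal (4 * C) * dirichlet_form p \<mu> f" .
qed

lemma orlicz_ineq_imp_cap_ineq:
  assumes p: "\<And>x y. 0 \<le> p x y" and conj: "\<And>r. 0 \<le> r \<Longrightarrow> \<Psi> r = lf_conj \<Phi> r"
    and \<Psi>_0: "\<Psi> 0 = 0" and C: "0 < C" and orlicz: "orlicz_ineq p \<mu> B \<nu> K \<Phi> C"
  shows "cap_ineq p \<mu> B \<nu> K \<Psi> C"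
  unfolding cap_ineq_iff_orlicz_profile capacity_def
proof (intro allI impI ennreal_le_mult_INF[OF C])
  fix A and g :: "'a \<Rightarrow> real"
  assume "g \<in> {g. (\<forall>x\<in>A. g x = 1) \<and> (\<forall>x\<in>B. g x = 0)}"
  hence g_A: "\<And>x. x \<in> A \<Longrightarrow> g x = 1" and g_B: "\<And>x. x \<in> B \<Longrightarrow> g x = 0" by auto
  define h where "h x = max 0 (min 1 (g x))" for x
  have h_A: "h x = 1" if "x \<in> A" for x using g_A[OF that] by (simp add: h_def)
  have h_B: "\<forall>x\<in>B. h x = 0" using g_B by (simp add: h_def)
  have h_bounded: "(h x)\<^sup>2 \<le> 1" for x
    by (auto simp: h_def abs_square_le_1)
  have h_l2: "(\<lambda>x. pmf \<mu> x * (h x)\<^sup>2) summable_on UNIV"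
  proof (rule summable_on_comparison_test)
    show "pmf \<mu> summable_on UNIV"
      by (rule abs_summable_summable[OF abs_summable_equivalent[THEN iffD2, OF pmf_abs_summable]])
    show "pmf \<mu> x * (h x)\<^sup>2 \<le> pmf \<mu> x" for x
      using h_bounded[of x] mult_left_mono[of "(h x)\<^sup>2" 1 "pmf \<mu> x"] by simp
  qed simp
  have "orlicz_profile \<nu> \<Psi> K A \<le> orlicz_norm \<Phi> \<nu> K (\<lambda>x. (h x)\<^sup>2)"
  proof (rule orlicz_profile_le_orlicz_norm[OF conj \<Psi>_0])
    fix x :: 'a assume "x \<in> A"
    hence "h x = 1" by (rule h_A)
    thus "1 \<le> \<bar>(h x)\<^sup>2\<bar>" by simp
  qed
  also have "\<dots> \<le> ennreal C * dirichlet_form p \<mu> h"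
    using orlicz h_l2 h_B unfolding orlicz_ineq_def by blast
  also have "\<dots> \<le> ennreal C * dirichlet_form p \<mu> g"
    unfolding h_def
    by (intro mult_left_mono dirichlet_form_comp_contraction_le p) (auto simp: max_def min_def)
  finally show "orlicz_profile \<nu> \<Psi> K A \<le> ennreal C * dirichlet_form p \<mu> g" .
qed

theorem mainTheorem8:
  fixes p :: "'a::countable \<Rightarrow> 'a \<Rightarrow> real"
    and \<mu> \<nu> :: "'a pmf"
    and B :: "'a set"
    and K :: real
    and \<Phi> \<Psi> :: "real \<Rightarrow> ennreal"
  assumes chain: "reversible_chain p \<mu>"
    and B_ne: "B \<noteq> {}"
    and K_pos: "0 < K"
    and young_Phi: "young_function \<Phi>"
    and young_Psi: "young_function \<Psi>"
    and conj: "\<And>r. 0 \<le> r \<Longrightarrow> \<Psi> r = lf_conj \<Phi> r"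
  shows "(\<forall>C\<^sub>\<Psi>>0. cap_ineq p \<mu> B \<nu> K \<Psi> C\<^sub>\<Psi> \<longrightarrow> orlicz_ineq p \<mu> B \<nu> K \<Phi> (4 * C\<^sub>\<Psi>))
       \<and> (\<forall>C\<^sub>\<Phi>>0. orlicz_ineq p \<mu> B \<nu> K \<Phi> C\<^sub>\<Phi> \<longrightarrow> cap_ineq p \<mu> B \<nu> K \<Psi> C\<^sub>\<Phi>)"
proof -
  have p: "\<And>x y. 0 \<le> p x y" using chain unfolding reversible_chain_def by blast
  have \<Psi>_0: "\<Psi> 0 = 0" using young_Psi unfolding young_function_def by blast
  show ?thesis
    using cap_ineq_imp_orlicz_ineq[of p, OF p conj K_pos]
      orlicz_ineq_imp_cap_ineq[of p, OF p conj \<Psi>_0]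
    by blast
qed

end
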